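(* Let $p,g_i,S,d,R,\eta_i,\beta,f_\gamma,N,D,p^*$ be as in the context. Suppose that for all positive integers $n',d'$ and all integers $r\ge 0$ we are given a set $K^r_{n',2d'}$ of forms of degree $2d'$ in $n'$ variables such that: (a) $K^r_{n',2d'}\subseteq P_{n',2d'}$ for all $r$, and there exists a positive definite form $s_{n',2d'}\in K^0_{n',2d'}$; (b) if a form $q$ of degree $2d'$ in $n'$ variables is positive definite, then there exists $r\in\mathbb{N}$ with $q\in K^r_{n',2d'}$; (c) $K^r_{n',2d'}\subseteq K^{r+1}_{n',2d'}$ for all $r$; (d) if $q\in K^r_{n',2d'}$, then $q+\epsilon\, s_{n',2d'}\in K^r_{n',2d'}$ for all $\epsilon\in[0,1]$. For each positive integer $r$ let $$l_r=\sup\Big\{\gamma\in\mathbb{R} : f_\gamma(z)-\tfrac{1}{r}s_{N,2D}(z)\in K^r_{N,2D}\Big\}$$ (with $\sup\emptyset=-\infty$). Then $l_r\le p^*$ for all $r$, the sequence $\{l_r\}$ is nondecreasing, and $\lim_{r\to\infty}l_r=p^*$.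
   Context: Let $p,g_1,\dots,g_m$ be real polynomials in $x=(x_1,\dots,x_n)$ and let $S=\{x\in\mathbb{R}^n : g_i(x)\ge 0,\ i=1,\dots,m\}$. Let $p^*=\inf_{x\in S}p(x)$ (with $p^*=+\infty$ if $S=\emptyset$). Let $d\ge 1$ be the integer such that $2d$ is the smallest even integer larger than or equal to the maximum of the degrees of $p,g_1,\dots,g_m$. Assume there is $R>0$ with $\sum_{i=1}^n x_i^2\le R$ for all $x\in S$. Let $\eta_1,\dots,\eta_m$ be real numbers with $g_i(x)\le\eta_i$ for all $x\in S$, and let $\beta$ be a real number with $-p(x)\le\beta$ for all $x\in S$. For a polynomial $q$ in $x$ of degree at most $2d$, $y^{2d}q(x/y)$ denotes its homogenization to a form of degree $2d$ in $(x,y)$. For $\gamma\in\mathbb{R}$ define the form in the variables $z=(x,s,y)=(x_1,\dots,x_n,s_0,\dots,s_{m+1},y)$: $$f_\gamma(x,s,y)=\big(\gamma y^{2d}-y^{2d}p(x/y)-s_0^2y^{2d-2}\big)^2+\sum_{i=1}^m\big(y^{2d}g_i(x/y)-s_i^2y^{2d-2}\big)^2+\Big(\big(R+\textstyle\sum_{i=1}^m\eta_i+\beta+\gamma\big)^d y^{2d}-\big(\sum_{i=1}^n x_i^2+\sum_{i=0}^m s_i^2\big)^d-s_{m+1}^{2d}\Big)^2.$$ Set $N=n+m+3$ and $D=2d$, so $f_\gamma$ is a form of degree $2D$ in $N$ variables. $P_{n',2d'}$ denotes the set of nonnegative forms (forms $q$ with $q(x)\ge0$ for all $x$) of degree $2d'$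 in $n'$ variables; a form is positive definite if it is positive at every nonzero point. *)

theory Defs
  imports "HOL-Analysis.Analysis" "HOL-Library.Extended_Real"
begin

text \<open>Points of R^n are represented as functions nat => real (only coordinates < n matter).
Exponent vectors are functions alpha :: nat => nat.\<close>

definition monom :: "nat \<Rightarrow> (nat \<Rightarrow> nat) \<Rightarrow> (nat \<Rightarrow> real) \<Rightarrow> real" where
  "monom n \<alpha> x = (\<Prod>i<n. x i ^ \<alpha> i)"

definition tdeg :: "nat \<Rightarrow> (nat \<Rightarrow> nat) \<Rightarrow> nat" where
  "tdeg n \<alpha> = (\<Sum>i<n. \<alpha> i)"

definition hexps :: "nat \<Rightarrow> nat \<Rightarrow> (nat \<Rightarrow> nat) set" where
  "hexps n k = {\<alpha>. (\<forall>i\<ge>n. \<alpha> i = 0) \<and> tdeg n \<alpha> = k}"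

definition is_form :: "nat \<Rightarrow> nat \<Rightarrow> ((nat \<Rightarrow> real) \<Rightarrow> real) \<Rightarrow> bool" where
  "is_form n k f \<longleftrightarrow> (\<exists>c. \<forall>x. f x = (\<Sum>\<alpha>\<in>hexps n k. c \<alpha> * monom n \<alpha> x))"

definition nonneg_forms :: "nat \<Rightarrow> nat \<Rightarrow> ((nat \<Rightarrow> real) \<Rightarrow> real) set" where
  "nonneg_forms n k = {f. is_form n k f \<and> (\<forall>x. f x \<ge> 0)}"

definition pos_def :: "nat \<Rightarrow> ((nat \<Rightarrow> real) \<Rightarrow> real) \<Rightarrow> bool" where
  "pos_def n f \<longleftrightarrow> (\<forall>x. (\<exists>i<n. x i \<noteq> 0) \<longrightarrow> f x > 0)"

text \<open>Polynomials in n variables are given by coefficient functions c :: (nat => nat) => real.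
deg_le n k c: c is a polynomial in the variables x_0..x_{n-1} of degree at most k.\<close>
definition deg_le :: "nat \<Rightarrow> nat \<Rightarrow> ((nat \<Rightarrow> nat) \<Rightarrow> real) \<Rightarrow> bool" where
  "deg_le n k c \<longleftrightarrow> (\<forall>\<alpha>. c \<alpha> \<noteq> 0 \<longrightarrow> (\<forall>i\<ge>n. \<alpha> i = 0) \<and> tdeg n \<alpha> \<le> k)"

definition peval :: "nat \<Rightarrow> ((nat \<Rightarrow> nat) \<Rightarrow> real) \<Rightarrow> (nat \<Rightarrow> real) \<Rightarrow> real" where
  "peval n c x = (\<Sum>\<alpha> | c \<alpha> \<noteq> 0. c \<alpha> * monom n \<alpha> x)"

text \<open>Homogenization y^k q(x/y) of a polynomial q of degree <= k, written via coefficients;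
x-variables are z 0..z (n-1), and y is z yi.\<close>
definition homog :: "nat \<Rightarrow> nat \<Rightarrow> ((nat \<Rightarrow> nat) \<Rightarrow> real) \<Rightarrow> nat \<Rightarrow> (nat \<Rightarrow> real) \<Rightarrow> real" where
  "homog n k c yi z = (\<Sum>\<alpha> | c \<alpha> \<noteq> 0. c \<alpha> * monom n \<alpha> z * z yi ^ (k - tdeg n \<alpha>))"

text \<open>The form f_gamma in z = (x_0..x_{n-1}, s_0..s_{m+1}, y), with
x_i = z i, s_j = z (n+j), y = z (n+m+2). The constraints g_1..g_m are g 0..g (m-1).\<close>
definition fgamma :: "nat \<Rightarrow> nat \<Rightarrow> nat \<Rightarrow> ((nat \<Rightarrow> nat) \<Rightarrow> real) \<Rightarrow> (nat \<Rightarrow> (nat \<Rightarrow> nat) \<Rightarrow> real)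
    \<Rightarrow> real \<Rightarrow> (nat \<Rightarrow> real) \<Rightarrow> real \<Rightarrow> real \<Rightarrow> (nat \<Rightarrow> real) \<Rightarrow> real" where
  "fgamma n m d p g R \<eta> \<beta> \<gamma> z =
     (let y = z (n + m + 2); s = (\<lambda>j. z (n + j)) in
       (\<gamma> * y ^ (2*d) - homog n (2*d) p (n + m + 2) z - (s 0)\<^sup>2 * y ^ (2*d - 2))\<^sup>2
     + (\<Sum>i<m. (homog n (2*d) (g i) (n + m + 2) z - (s (Suc i))\<^sup>2 * y ^ (2*d - 2))\<^sup>2)
     + ((R + (\<Sum>i<m. \<eta> i) + \<beta> + \<gamma>) ^ d * y ^ (2*d)
         - ((\<Sum>i<n. (z i)\<^sup>2) + (\<Sum>j\<le>m. (s j)\<^sup>2)) ^ d - (s (m + 1)) ^ (2*d))\<^sup>2)"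

end

theory Submission
  imports Defs
begin

text \<open>For \<open>\<gamma> < p*\<close> the form \<open>f\<^sub>\<gamma>\<close> has no nontrivial real zero: where \<open>y = 0\<close> the last
  square forces every other coordinate to vanish, and a zero with \<open>y \<noteq> 0\<close> dehomogenizes to a
  point of \<open>S\<close> with \<open>p(x) \<le> \<gamma>\<close>. So \<open>f\<^sub>\<gamma>\<close> is positive definite, remains so after subtracting a
  small multiple of \<open>s\<close>, and by (b)--(d) \<open>f\<^sub>\<gamma> - s/r\<close> lies in \<open>K\<^sup>r\<close> for all large \<open>r\<close>.
  For \<open>\<gamma> > p*\<close> a point of \<open>S\<close> with \<open>p(x) < \<gamma>\<close> gives a zero of \<open>f\<^sub>\<gamma>\<close> at \<open>y = 1\<close>, where \<open>s > 0\<close>,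
  so \<open>f\<^sub>\<gamma> - s/r\<close> is not even nonnegative and cannot lie in any \<open>K\<^sup>r\<close>.\<close>

section \<open>Forms\<close>

lemma finite_hexps: "finite (hexps n k)"
proof -
  have "hexps n k \<subseteq> {f. \<forall>x. (x \<in> {..<n} \<longrightarrow> f x \<in> {..k}) \<and> (x \<notin> {..<n} \<longrightarrow> f x = 0)}"
  proof
    fix \<alpha> assume \<alpha>: "\<alpha> \<in> hexps n k"
    have "\<alpha> i \<le> k" if "i < n" for i
      using \<alpha> that member_le_sum[of i "{..<n}" \<alpha>] unfolding hexps_def tdeg_def by auto
    then show "\<alpha> \<in> {f. \<forall>x. (x \<in> {..<n} \<longrightarrow> f x \<in> {..k}) \<and> (x \<notin> {..<n} \<longrightarrow> f x = 0)}"
      using \<alpha> unfolding hexps_def by auto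
  qed
  moreover have "finite {f::nat\<Rightarrow>nat. \<forall>x. (x \<in> {..<n} \<longrightarrow> f x \<in> {..k}) \<and> (x \<notin> {..<n} \<longrightarrow> f x = 0)}"
    by (rule finite_set_of_finite_funs) auto
  ultimately show ?thesis by (rule finite_subset)
qed

lemma hexps_0: "hexps n 0 = {\<lambda>_. 0}"
  unfolding hexps_def tdeg_def by (auto simp: fun_eq_iff) (metis lessThan_iff not_le)

lemma monom_add: "monom n (\<lambda>i. \<alpha> i + \<beta> i) x = monom n \<alpha> x * monom n \<beta> x"
  unfolding monom_def by (simp add: power_add prod.distrib)

lemma monom_scale: "monom n \<alpha> (\<lambda>i. t * x i) = t ^ tdeg n \<alpha> * monom n \<alpha> x"
  unfolding monom_def tdeg_def by (simp add: power_mult_distrib prod.distrib power_sum)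

lemma is_form_const: "is_form n 0 (\<lambda>_. a)"
  unfolding is_form_def hexps_0 by (rule exI[of _ "\<lambda>_. a"]) (simp add: monom_def)

lemma is_form_0: "is_form n k (\<lambda>_. 0)"
  unfolding is_form_def by (rule exI[of _ "\<lambda>_. 0"]) simp

lemma is_form_add: "is_form n k f \<Longrightarrow> is_form n k g \<Longrightarrow> is_form n k (\<lambda>x. f x + g x)"
  unfolding is_form_def
  apply clarify
  subgoal for c e by (rule exI[of _ "\<lambda>\<alpha>. c \<alpha> + e \<alpha>"]) (simp add: distrib_right sum.distrib)
  done

lemma is_form_scale: "is_form n k f \<Longrightarrow> is_form n k (\<lambda>x. a * f x)"
  unfolding is_form_def
  apply clarify
  subgoal for c by (rule exI[of _ "\<lambda>\<alpha>. a * c \<alpha>"]) (simp add: sum_distrib_left mult.assoc)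
  done

lemma is_form_diff: "is_form n k f \<Longrightarrow> is_form n k g \<Longrightarrow> is_form n k (\<lambda>x. f x - g x)"
  using is_form_add[of n k f "\<lambda>x. (-1) * g x"] is_form_scale[of n k g "-1"] by simp

lemma is_form_sum: "(\<And>i. i \<in> A \<Longrightarrow> is_form n k (f i)) \<Longrightarrow> is_form n k (\<lambda>x. \<Sum>i\<in>A. f i x)"
proof (induction A rule: infinite_finite_induct)
  case (insert i A)
  then show ?case using is_form_add[of n k "f i"] by simp
qed (simp_all add: is_form_0)

lemma is_form_mult:
  assumes "is_form n a f" "is_form n b g"
  shows "is_form n (a + b) (\<lambda>x. f x * g x)"
proof -
  obtain c where c: "\<And>x. f x = (\<Sum>\<alpha>\<in>hexps n a. c \<alpha> * monom n \<alpha> x)"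
    using assms(1) unfolding is_form_def by blast
  obtain e where e: "\<And>x. g x = (\<Sum>\<alpha>\<in>hexps n b. e \<alpha> * monom n \<alpha> x)"
    using assms(2) unfolding is_form_def by blast
  define P where "P = hexps n a \<times> hexps n b"
  define G where "G = (\<lambda>\<pi>::(nat\<Rightarrow>nat)\<times>(nat\<Rightarrow>nat). (\<lambda>i. fst \<pi> i + snd \<pi> i))"
  define w where "w = (\<lambda>\<pi>::(nat\<Rightarrow>nat)\<times>(nat\<Rightarrow>nat). c (fst \<pi>) * e (snd \<pi>))"
  define C where "C = (\<lambda>\<gamma>. \<Sum>\<pi>\<in>{\<pi> \<in> P. G \<pi> = \<gamma>}. w \<pi>)"
  have "finite P" unfolding P_def by (simp add: finite_hexps)
  moreover have "G ` P \<subseteq> hexps n (a + b)"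
    unfolding P_def G_def hexps_def tdeg_def by (auto simp: sum.distrib)
  ultimately have regroup: "(\<Sum>\<pi>\<in>P. w \<pi> * monom n (G \<pi>) x)
      = (\<Sum>\<gamma>\<in>hexps n (a+b). \<Sum>\<pi>\<in>{\<pi> \<in> P. G \<pi> = \<gamma>}. w \<pi> * monom n (G \<pi>) x)" for x
    by (rule sum.group[symmetric, OF _ finite_hexps])
  have "f x * g x = (\<Sum>\<gamma>\<in>hexps n (a+b). C \<gamma> * monom n \<gamma> x)" for x
  proof -
    have "f x * g x = (\<Sum>\<pi>\<in>P. w \<pi> * monom n (G \<pi>) x)"
      unfolding c e P_def sum_product sum.cartesian_product w_def G_def monom_add
      by (rule sum.cong) (auto simp: algebra_simps)
    also have "\<dots> = (\<Sum>\<gamma>\<in>hexps n (a+b). C \<gamma> * monom n \<gamma> x)"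
      unfolding regroup C_def sum_distrib_right by (intro sum.cong) auto
    finally show ?thesis .
  qed
  then show ?thesis unfolding is_form_def by blast
qed

lemma is_form_pow: "is_form n k f \<Longrightarrow> is_form n (j * k) (\<lambda>x. f x ^ j)"
proof (induction j)
  case 0
  then show ?case using is_form_const[of n 1] by simp
next
  case (Suc j)
  then show ?case using is_form_mult[OF Suc.prems Suc.IH[OF Suc.prems]] by simp
qed

lemma is_form_prod: "finite A \<Longrightarrow> (\<And>i. i \<in> A \<Longrightarrow> is_form n (k i) (f i))
   \<Longrightarrow> is_form n (\<Sum>i\<in>A. k i) (\<lambda>x. \<Prod>i\<in>A. f i x)"
proof (induction A rule: finite_induct)
  case empty
  then show ?case using is_form_const[of n 1] by simp
next
  case (insert i A)
  then show ?case using is_form_mult[of n "k i" "f i" "sum k A"] by simp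
qed

lemma is_form_var:
  assumes "i < n" shows "is_form n 1 (\<lambda>x. x i)"
proof -
  define u where "u = (\<lambda>j::nat. if j = i then 1::nat else 0)"
  have u: "u \<in> hexps n 1" using assms unfolding u_def hexps_def tdeg_def by auto
  have monom_u: "monom n u x = x i" for x
  proof -
    have "monom n u x = (\<Prod>j<n. if j = i then x j else 1)"
      unfolding monom_def u_def by (rule prod.cong) auto
    then show ?thesis using assms by (simp add: prod.delta)
  qed
  have "(\<Sum>\<alpha>\<in>hexps n 1. (if \<alpha> = u then 1 else 0) * monom n \<alpha> x)
      = (\<Sum>\<alpha>\<in>hexps n 1. if \<alpha> = u then monom n \<alpha> x else 0)" for x
    by (rule sum.cong) auto
  also have "\<dots> x = x i" for x using u monom_u by (simp add: sum.delta[OF finite_hexps])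
  finally show ?thesis unfolding is_form_def by metis
qed

lemma is_form_var_pow: "i < n \<Longrightarrow> is_form n k (\<lambda>x. x i ^ k)"
  using is_form_pow[OF is_form_var, of i n k] by simp

lemma form_local: "is_form n k f \<Longrightarrow> (\<And>i. i < n \<Longrightarrow> x i = x' i) \<Longrightarrow> f x = f x'"
  unfolding is_form_def monom_def by auto

lemma form_homogeneous: "is_form n k f \<Longrightarrow> f (\<lambda>i. t * x i) = t ^ k * f x"
  unfolding is_form_def
  by (auto simp: monom_scale sum_distrib_left hexps_def intro!: sum.cong)

lemma form_scale_local:
  "is_form n k f \<Longrightarrow> (\<And>i. i < n \<Longrightarrow> x i = t * x' i) \<Longrightarrow> f x = t ^ k * f x'"
  using form_local[of n k f x "\<lambda>i. t * x' i"] form_homogeneous by auto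

lemma continuous_on_form: "is_form n k f \<Longrightarrow> continuous_on UNIV f"
  unfolding is_form_def monom_def by (auto intro!: continuous_intros)

section \<open>Positive definite forms and the hierarchy\<close>

definition unit_sphereN :: "nat \<Rightarrow> (nat \<Rightarrow> real) set" where
  "unit_sphereN n = {x. (\<forall>i\<ge>n. x i = 0) \<and> (\<Sum>i<n. (x i)\<^sup>2) = 1}"

lemma compact_unit_sphereN: "compact (unit_sphereN n)"
proof -
  let ?B = "\<lambda>i::nat. if i < n then cball (0::real) 1 else {0}"
  have "compactin (product_topology (\<lambda>_. euclidean) UNIV) (PiE UNIV ?B)"
    by (subst compactin_PiE) auto
  then have "compact (PiE UNIV ?B)" by (simp add: euclidean_product_topology)
  moreover have "closed {x::nat\<Rightarrow>real. (\<Sum>i<n. (x i)\<^sup>2) = 1}"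
    by (rule closed_Collect_eq) (auto intro!: continuous_intros)
  moreover have "unit_sphereN n = PiE UNIV ?B \<inter> {x. (\<Sum>i<n. (x i)\<^sup>2) = 1}"
  proof (intro set_eqI iffI)
    fix x assume x: "x \<in> unit_sphereN n"
    have "\<bar>x i\<bar> \<le> 1" if "i < n" for i
      using x that member_le_sum[of i "{..<n}" "\<lambda>i. (x i)\<^sup>2"]
      unfolding unit_sphereN_def by (simp add: abs_square_le_1[symmetric])
    then have "x i \<in> ?B i" for i using x unfolding unit_sphereN_def by (cases "i < n") auto
    then show "x \<in> PiE UNIV ?B \<inter> {x. (\<Sum>i<n. (x i)\<^sup>2) = 1}"
      using x unfolding unit_sphereN_def by (simp add: PiE_UNIV_domain)
  next
    fix x assume x: "x \<in> PiE UNIV ?B \<inter> {x. (\<Sum>i<n. (x i)\<^sup>2) = 1}"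
    have "x i = 0" if "n \<le> i" for i using PiE_mem[of x UNIV ?B i] x that by auto
    then show "x \<in> unit_sphereN n" using x unfolding unit_sphereN_def by simp
  qed
  ultimately show ?thesis by (simp add: compact_Int_closed)
qed

lemma unit_sphereN_nonzero:
  assumes "x \<in> unit_sphereN n" shows "\<exists>i<n. x i \<noteq> 0"
proof (rule ccontr)
  assume "\<not> ?thesis"
  then have "(\<Sum>i<n. (x i)\<^sup>2) = 0" by simp
  with assms show False unfolding unit_sphereN_def by simp
qed

lemma unit_sphereN_normalize:
  assumes "\<exists>i<n. x i \<noteq> 0"
  shows "\<exists>t>0. \<exists>u\<in>unit_sphereN n. \<forall>i<n. x i = t * u i"
proof -
  define t where "t = sqrt (\<Sum>i<n. (x i)\<^sup>2)"
  from assms obtain j where "j < n" "x j \<noteq> 0" by blast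
  then have "0 < (x j)\<^sup>2" "(x j)\<^sup>2 \<le> (\<Sum>i<n. (x i)\<^sup>2)"
    by (auto intro: member_le_sum)
  then have sum_pos: "0 < (\<Sum>i<n. (x i)\<^sup>2)" by linarith
  then have t: "t > 0" unfolding t_def by simp
  define u where "u = (\<lambda>i. if i < n then x i / t else 0)"
  have "(\<Sum>i<n. (u i)\<^sup>2) = (\<Sum>i<n. (x i)\<^sup>2) / t\<^sup>2"
    unfolding u_def by (simp add: power_divide sum_divide_distrib)
  also have "t\<^sup>2 = (\<Sum>i<n. (x i)\<^sup>2)" unfolding t_def by (simp add: sum_nonneg)
  finally have "u \<in> unit_sphereN n" using sum_pos unfolding unit_sphereN_def u_def by simp
  moreover have "\<forall>i<n. x i = t * u i" unfolding u_def using t by simp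
  ultimately show ?thesis using t by blast
qed

lemma pos_def_diff_small_multiple:
  assumes F: "is_form n k F" "pos_def n F" and G: "is_form n k G" and n: "n > 0"
  shows "\<exists>\<epsilon>>0. pos_def n (\<lambda>x. F x - \<epsilon> * G x)"
proof -
  let ?C = "unit_sphereN n"
  have "(\<Sum>i<n. ((\<lambda>i. if i = 0 then 1 else 0) i)\<^sup>2) = (\<Sum>i<n. if i = 0 then 1 else (0::real))"
    by (rule sum.cong) auto
  then have "(\<lambda>i. if i = 0 then 1 else 0) \<in> ?C" using n unfolding unit_sphereN_def by simp
  then have C: "?C \<noteq> {}" by blast
  obtain u0 where u0: "u0 \<in> ?C" "\<And>u. u \<in> ?C \<Longrightarrow> F u0 \<le> F u"
    using continuous_attains_inf[OF compact_unit_sphereN C continuous_on_subset[OF continuous_on_form[OF F(1)]]]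
    by auto
  obtain u1 where u1: "\<And>u. u \<in> ?C \<Longrightarrow> G u \<le> G u1"
    using continuous_attains_sup[OF compact_unit_sphereN C continuous_on_subset[OF continuous_on_form[OF G]]]
    by auto
  have Fu0: "F u0 > 0" using F(2) unit_sphereN_nonzero[OF u0(1)] unfolding pos_def_def by blast
  define M where "M = \<bar>G u1\<bar> + 1"
  have M: "M > 0" unfolding M_def by simp
  define \<epsilon> where "\<epsilon> = F u0 / (2 * M)"
  have \<epsilon>: "\<epsilon> > 0" unfolding \<epsilon>_def using Fu0 M by simp
  have on_sphere: "F u - \<epsilon> * G u > 0" if "u \<in> ?C" for u
  proof -
    have "\<epsilon> * G u \<le> \<epsilon> * M" using u1[OF that] \<epsilon> unfolding M_def by (intro mult_left_mono) auto
    also have "\<dots> = F u0 / 2" unfolding \<epsilon>_def using M by simp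
    also have "\<dots> < F u" using u0(2)[OF that] Fu0 by simp
    finally show ?thesis by simp
  qed
  have "F x - \<epsilon> * G x > 0" if nonzero: "\<exists>i<n. x i \<noteq> 0" for x
  proof -
    obtain t u where t: "t > 0" and u: "u \<in> ?C" and x: "\<forall>i<n. x i = t * u i"
      using unit_sphereN_normalize[OF nonzero] by blast
    have "F x - \<epsilon> * G x = t ^ k * (F u - \<epsilon> * G u)"
      using form_scale_local[OF F(1)] form_scale_local[OF G] x by (simp add: algebra_simps)
    then show ?thesis using on_sphere[OF u] t by simp
  qed
  then show ?thesis unfolding pos_def_def using \<epsilon> by blast
qed

lemma Sup_increasing_tendsto:
  fixes \<Gamma> :: "nat \<Rightarrow> real set" and a :: ereal
  assumes mono: "\<And>r. r \<ge> 1 \<Longrightarrow> \<Gamma> r \<subseteq> \<Gamma> (Suc r)"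
    and upper: "\<And>r \<gamma>. r \<ge> 1 \<Longrightarrow> \<gamma> \<in> \<Gamma> r \<Longrightarrow> ereal \<gamma> \<le> a"
    and exhaust: "\<And>\<gamma>. ereal \<gamma> < a \<Longrightarrow> \<exists>r\<ge>1. \<gamma> \<in> \<Gamma> r"
  defines "l \<equiv> \<lambda>r. Sup (ereal ` \<Gamma> r)"
  shows "(\<forall>r\<ge>1. l r \<le> a) \<and> (\<forall>r\<ge>1. l r \<le> l (Suc r)) \<and> (\<lambda>r. l (Suc r)) \<longlonglongrightarrow> a"
proof (intro conjI allI impI)
  show le_a: "l r \<le> a" if "r \<ge> 1" for r
    unfolding l_def using upper[OF that] by (auto intro: Sup_least)
  show "l r \<le> l (Suc r)" if "r \<ge> 1" for r
    unfolding l_def using mono[OF that] by (intro Sup_subset_mono image_mono)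
  show "(\<lambda>r. l (Suc r)) \<longlonglongrightarrow> a"
  proof (rule order_tendstoI)
    fix b assume "b < a"
    then obtain \<gamma> where b: "b < ereal \<gamma>" "ereal \<gamma> < a" using ereal_dense2 by blast
    obtain r0 where "r0 \<ge> 1" "\<gamma> \<in> \<Gamma> r0" using exhaust[OF b(2)] by blast
    then have "\<gamma> \<in> \<Gamma> (Suc r)" if "r \<ge> r0" for r
      using lift_Suc_mono_le[of "\<lambda>r. \<Gamma> (r + r0)" 0 "Suc r - r0"] mono that by auto
    then have "b < l (Suc r)" if "r \<ge> r0" for r
      unfolding l_def using b(1) that by (meson Sup_upper image_eqI order_less_le_trans)
    then show "\<forall>\<^sub>F r in sequentially. b < l (Suc r)" by (auto simp: eventually_sequentially)
  next
    fix b assume "a < b"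
    then show "\<forall>\<^sub>F r in sequentially. l (Suc r) < b"
      using le_a by (intro always_eventually) (auto intro: le_less_trans)
  qed
qed

lemma hierarchy_mem_mono:
  assumes mono: "\<And>r. K r \<subseteq> K (Suc r)"
    and add: "\<And>r q \<epsilon>. q \<in> K r \<Longrightarrow> 0 \<le> \<epsilon> \<Longrightarrow> \<epsilon> \<le> 1 \<Longrightarrow> (\<lambda>x. q x + \<epsilon> * s x) \<in> K r"
    and q: "(\<lambda>x. q x - (1 / real k) * s x) \<in> K j"
    and "1 \<le> k" "k \<le> r" "j \<le> r"
  shows "(\<lambda>x. q x - (1 / real r) * s x) \<in> K r"
proof -
  have "K j \<subseteq> K r" using lift_Suc_mono_le[of K, OF mono \<open>j \<le> r\<close>] .
  moreover have "1 / real r \<le> 1 / real k" "1 / real k \<le> 1" "0 \<le> 1 / real r"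
    using \<open>1 \<le> k\<close> \<open>k \<le> r\<close> by (auto simp: frac_le)
  then have "0 \<le> 1 / real k - 1 / real r" "1 / real k - 1 / real r \<le> 1" by linarith+
  ultimately have "(\<lambda>x. (q x - (1 / real k) * s x) + (1 / real k - 1 / real r) * s x) \<in> K r"
    using q by (intro add) auto
  then show ?thesis by (simp add: algebra_simps)
qed

lemma pos_def_mem_hierarchy:
  assumes n: "n > 0" and s: "is_form n k s" "\<And>x. s x \<ge> 0"
    and K_pos_def: "\<And>q. is_form n k q \<Longrightarrow> pos_def n q \<Longrightarrow> \<exists>r. q \<in> K r"
    and K_mono: "\<And>r. K r \<subseteq> K (Suc r)"
    and K_add: "\<And>r q \<epsilon>. q \<in> K r \<Longrightarrow> 0 \<le> \<epsilon> \<Longrightarrow> \<epsilon> \<le> 1 \<Longrightarrow> (\<lambda>x. q x + \<epsilon> * s x) \<in> K r"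
    and F: "is_form n k F" "pos_def n F"
  shows "\<exists>r\<ge>1. (\<lambda>x. F x - (1 / real r) * s x) \<in> K r"
proof -
  obtain \<epsilon> where "\<epsilon> > 0" and pos: "pos_def n (\<lambda>x. F x - \<epsilon> * s x)"
    using pos_def_diff_small_multiple[OF F s(1) n] by blast
  then obtain k0 where k0: "k0 > 0" "1 / real k0 < \<epsilon>"
    using ex_inverse_of_nat_less by (metis inverse_eq_divide)
  define G where "G x = F x - (1 / real k0) * s x" for x
  have "G x > 0" if "\<exists>i<n. x i \<noteq> 0" for x
  proof -
    have "0 \<le> (\<epsilon> - 1 / real k0) * s x" using k0 s(2)[of x] by simp
    then show ?thesis using pos that unfolding pos_def_def G_def by (auto simp: algebra_simps)
  qed
  moreover have "is_form n k G" unfolding G_def[abs_def]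
    by (intro is_form_diff is_form_scale F s)
  ultimately obtain r0 where "G \<in> K r0" using K_pos_def unfolding pos_def_def by blast
  then have "(\<lambda>x. F x - (1 / real (max r0 k0)) * s x) \<in> K (max r0 k0)"
    unfolding G_def[abs_def] using k0 by (intro hierarchy_mem_mono[of K s, OF K_mono K_add]) auto
  then show ?thesis using k0 by (intro exI[of _ "max r0 k0"]) auto
qed

lemma hierarchy_bounds_tendsto:
  fixes K :: "nat \<Rightarrow> ((nat \<Rightarrow> real) \<Rightarrow> real) set" and s :: "(nat \<Rightarrow> real) \<Rightarrow> real"
    and F :: "real \<Rightarrow> (nat \<Rightarrow> real) \<Rightarrow> real" and a :: ereal and l :: "nat \<Rightarrow> ereal"
  assumes n: "n > 0"
    and K_nonneg: "\<And>r. K r \<subseteq> nonneg_forms n k"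
    and s: "s \<in> K 0" "pos_def n s"
    and K_pos_def: "\<And>q. is_form n k q \<Longrightarrow> pos_def n q \<Longrightarrow> \<exists>r. q \<in> K r"
    and K_mono: "\<And>r. K r \<subseteq> K (Suc r)"
    and K_add: "\<And>r q \<epsilon>. q \<in> K r \<Longrightarrow> 0 \<le> \<epsilon> \<Longrightarrow> \<epsilon> \<le> 1 \<Longrightarrow> (\<lambda>x. q x + \<epsilon> * s x) \<in> K r"
    and F_form: "\<And>\<gamma>. is_form n k (F \<gamma>)"
    and F_pos_def: "\<And>\<gamma>. ereal \<gamma> < a \<Longrightarrow> pos_def n (F \<gamma>)"
    and F_root: "\<And>\<gamma>. a < ereal \<gamma> \<Longrightarrow> \<exists>x. (\<exists>i<n. x i \<noteq> 0) \<and> F \<gamma> x = 0"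
    and l: "\<And>r. l r = Sup {ereal \<gamma> | \<gamma>. (\<lambda>x. F \<gamma> x - (1 / real r) * s x) \<in> K r}"
  shows "(\<forall>r\<ge>1. l r \<le> a) \<and> (\<forall>r\<ge>1. l r \<le> l (Suc r)) \<and> (\<lambda>r. l (Suc r)) \<longlonglongrightarrow> a"
proof -
  define \<Gamma> where "\<Gamma> r = {\<gamma>. (\<lambda>x. F \<gamma> x - (1 / real r) * s x) \<in> K r}" for r
  have s_form: "is_form n k s" and s_nonneg: "\<And>x. s x \<ge> 0"
    using K_nonneg s(1) unfolding nonneg_forms_def by auto
  have "l = (\<lambda>r. Sup (ereal ` \<Gamma> r))" unfolding l \<Gamma>_def by (auto simp: image_Collect)
  moreover have "(\<forall>r\<ge>1. Sup (ereal ` \<Gamma> r) \<le> a) \<and> (\<forall>r\<ge>1. Sup (ereal ` \<Gamma> r) \<le> Sup (ereal ` \<Gamma> (Suc r)))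
      \<and> (\<lambda>r. Sup (ereal ` \<Gamma> (Suc r))) \<longlonglongrightarrow> a"
  proof (rule Sup_increasing_tendsto)
    show "\<Gamma> r \<subseteq> \<Gamma> (Suc r)" if "r \<ge> 1" for r
      unfolding \<Gamma>_def using hierarchy_mem_mono[of K s, OF K_mono K_add, of _ r r "Suc r"] that
      by auto
  next
    show "ereal \<gamma> \<le> a" if r: "r \<ge> 1" and \<gamma>: "\<gamma> \<in> \<Gamma> r" for r \<gamma>
    proof (rule ccontr)
      assume "\<not> ereal \<gamma> \<le> a"
      then obtain x where x: "\<exists>i<n. x i \<noteq> 0" and root: "F \<gamma> x = 0" using F_root by force
      have "0 < (1 / real r) * s x" using s(2) x r unfolding pos_def_def by simp
      moreover have "0 \<le> F \<gamma> x - (1 / real r) * s x"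
        using \<gamma> K_nonneg unfolding \<Gamma>_def nonneg_forms_def by blast
      ultimately show False using root by simp
    qed
  next
    fix \<gamma> assume "ereal \<gamma> < a"
    then show "\<exists>r\<ge>1. \<gamma> \<in> \<Gamma> r" unfolding \<Gamma>_def
      using pos_def_mem_hierarchy[OF n s_form s_nonneg K_pos_def K_mono K_add F_form F_pos_def] by blast
  qed
  ultimately show ?thesis by simp
qed

section \<open>The forms \<open>f\<^sub>\<gamma>\<close>\<close>

lemma deg_le_mono: "deg_le n k c \<Longrightarrow> k \<le> k' \<Longrightarrow> deg_le n k' c"
  unfolding deg_le_def by force

lemma ex_common_deg_le:
  fixes m :: nat
  shows "\<forall>i<m. \<exists>k. deg_le n k (c i) \<Longrightarrow> \<exists>k. \<forall>i<m. deg_le n k (c i)"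
proof (induction m)
  case (Suc m)
  then obtain k k' where "\<forall>i<m. deg_le n k (c i)" "deg_le n k' (c m)" by (meson less_Suc_eq)
  then have "\<forall>i<Suc m. deg_le n (max k k') (c i)" by (auto simp: less_Suc_eq intro: deg_le_mono)
  then show ?case ..
qed simp

lemma ex_even_deg_le:
  fixes m :: nat
  assumes "\<exists>k. deg_le n k p" "\<forall>i<m. \<exists>k. deg_le n k (g i)"
  shows "\<exists>d. d \<ge> 1 \<and> deg_le n (2*d) p \<and> (\<forall>i<m. deg_le n (2*d) (g i))"
proof -
  obtain kp kg where "deg_le n kp p" "\<forall>i<m. deg_le n kg (g i)"
    using assms(1) ex_common_deg_le[OF assms(2)] by blast
  then show ?thesis by (intro exI[of _ "kp + kg + 1"]) (auto intro: deg_le_mono)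
qed

lemma homog_is_form:
  assumes "deg_le n k c" "n \<le> N" "yi < N"
  shows "is_form N k (homog n k c yi)"
  unfolding homog_def[abs_def]
proof (rule is_form_sum)
  fix \<alpha> assume "\<alpha> \<in> {\<alpha>. c \<alpha> \<noteq> 0}"
  then have deg: "tdeg n \<alpha> \<le> k" using assms(1) unfolding deg_le_def by auto
  have "is_form N (tdeg n \<alpha>) (monom n \<alpha>)"
    unfolding monom_def[abs_def] tdeg_def
    by (rule is_form_prod) (use assms(2) in \<open>auto intro: is_form_var_pow\<close>)
  from is_form_mult[OF this is_form_var_pow[OF assms(3), of "k - tdeg n \<alpha>"]]
  have "is_form N k (\<lambda>z. monom n \<alpha> z * z yi ^ (k - tdeg n \<alpha>))" using deg by simp
  from is_form_scale[OF this, of "c \<alpha>"]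
  show "is_form N k (\<lambda>z. c \<alpha> * monom n \<alpha> z * z yi ^ (k - tdeg n \<alpha>))" by (simp add: mult.assoc)
qed

lemma homog_eq_power_peval:
  assumes "deg_le n k c" "\<And>i. i < n \<Longrightarrow> z i = y * x i" "z yi = y"
  shows "homog n k c yi z = y ^ k * peval n c x"
  unfolding homog_def peval_def sum_distrib_left
proof (rule sum.cong)
  fix \<alpha> assume "\<alpha> \<in> {\<alpha>. c \<alpha> \<noteq> 0}"
  then have deg: "tdeg n \<alpha> \<le> k" using assms(1) unfolding deg_le_def by auto
  have "monom n \<alpha> z = monom n \<alpha> (\<lambda>i. y * x i)" unfolding monom_def using assms(2) by auto
  then have "monom n \<alpha> z * z yi ^ (k - tdeg n \<alpha>) = y ^ (tdeg n \<alpha> + (k - tdeg n \<alpha>)) * monom n \<alpha> x"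
    using assms(3) by (simp add: monom_scale power_add)
  then show "c \<alpha> * monom n \<alpha> z * z yi ^ (k - tdeg n \<alpha>) = y ^ k * (c \<alpha> * monom n \<alpha> x)"
    using deg by simp
qed simp

lemma fgamma_unfold: "fgamma n m d p g R \<eta> \<beta> \<gamma> z =
     (\<gamma> * z (n+m+2) ^ (2*d) - homog n (2*d) p (n+m+2) z - (z n)\<^sup>2 * z (n+m+2) ^ (2*d-2))\<^sup>2
   + (\<Sum>i<m. (homog n (2*d) (g i) (n+m+2) z - (z (n + Suc i))\<^sup>2 * z (n+m+2) ^ (2*d-2))\<^sup>2)
   + ((R + (\<Sum>i<m. \<eta> i) + \<beta> + \<gamma>) ^ d * z (n+m+2) ^ (2*d)
       - ((\<Sum>i<n. (z i)\<^sup>2) + (\<Sum>j\<le>m. (z (n+j))\<^sup>2)) ^ d - z (n+m+1) ^ (2*d))\<^sup>2"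
  by (simp add: fgamma_def Let_def)

lemma fgamma_is_form:
  assumes "d \<ge> 1" "deg_le n (2*d) p" "\<forall>i<m. deg_le n (2*d) (g i)"
  shows "is_form (n+m+3) (2*(2*d)) (fgamma n m d p g R \<eta> \<beta> \<gamma>)"
proof -
  let ?N = "n+m+3"
  have y: "is_form ?N k (\<lambda>z. z (n+m+2) ^ k)" for k by (rule is_form_var_pow) simp
  have s_sq_y: "is_form ?N (2*d) (\<lambda>z. (z (n+j))\<^sup>2 * z (n+m+2) ^ (2*d-2))" if "j \<le> m" for j
  proof -
    have "is_form ?N (2 + (2*d-2)) (\<lambda>z. (z (n+j))\<^sup>2 * z (n+m+2) ^ (2*d-2))"
      using is_form_mult[OF is_form_var_pow y, of "n+j" 2 "2*d-2"] that by simp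
    moreover have "2 + (2*d-2) = 2*d" using \<open>d \<ge> 1\<close> by simp
    ultimately show ?thesis by simp
  qed
  have s0_sq_y: "is_form ?N (2*d) (\<lambda>z. (z n)\<^sup>2 * z (n+m+2) ^ (2*d-2))"
    using s_sq_y[of 0] by simp
  have hom: "is_form ?N (2*d) (homog n (2*d) q (n+m+2))" if "deg_le n (2*d) q" for q
    using homog_is_form[OF that] by simp
  have quad: "is_form ?N 2 (\<lambda>z. (\<Sum>i<n. (z i)\<^sup>2) + (\<Sum>j\<le>m. (z (n+j))\<^sup>2))"
    by (intro is_form_add is_form_sum is_form_var_pow) auto
  have quad_pow: "is_form ?N (2*d) (\<lambda>z. ((\<Sum>i<n. (z i)\<^sup>2) + (\<Sum>j\<le>m. (z (n+j))\<^sup>2)) ^ d)"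
    using is_form_pow[OF quad, of d] by (simp add: mult.commute)
  have sq: "is_form ?N (2*(2*d)) (\<lambda>z. (h z)\<^sup>2)" if "is_form ?N (2*d) h" for h
    using is_form_pow[OF that, of 2] by simp
  show ?thesis unfolding fgamma_unfold[abs_def]
    by (intro is_form_add is_form_sum sq is_form_diff is_form_scale y hom quad_pow
        s0_sq_y s_sq_y is_form_var_pow) (use assms in auto)
qed

lemma fgamma_nonneg: "fgamma n m d p g R \<eta> \<beta> \<gamma> z \<ge> 0"
  unfolding fgamma_def Let_def by (intro add_nonneg_nonneg sum_nonneg) auto

lemma sum_squares_eq_0_iff:
  fixes a c :: real and m :: nat
  shows "a\<^sup>2 + (\<Sum>i<m. (b i)\<^sup>2) + c\<^sup>2 = 0 \<longleftrightarrow> a = 0 \<and> (\<forall>i<m. b i = 0) \<and> c = 0"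
proof -
  have "(\<Sum>i<m. (b i)\<^sup>2) = 0 \<longleftrightarrow> (\<forall>i<m. b i = 0)" by (subst sum_nonneg_eq_0_iff) auto
  then show ?thesis by (simp add: add_nonneg_eq_0_iff sum_nonneg)
qed

lemma fgamma_eq_0_iff:
  "fgamma n m d p g R \<eta> \<beta> \<gamma> z = 0 \<longleftrightarrow>
     \<gamma> * z (n+m+2) ^ (2*d) = homog n (2*d) p (n+m+2) z + (z n)\<^sup>2 * z (n+m+2) ^ (2*d-2)
   \<and> (\<forall>i<m. homog n (2*d) (g i) (n+m+2) z = (z (n + Suc i))\<^sup>2 * z (n+m+2) ^ (2*d-2))
   \<and> (R + (\<Sum>i<m. \<eta> i) + \<beta> + \<gamma>) ^ d * z (n+m+2) ^ (2*d)
       = ((\<Sum>i<n. (z i)\<^sup>2) + (\<Sum>j\<le>m. (z (n+j))\<^sup>2)) ^ d + z (n+m+1) ^ (2*d)"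
  unfolding fgamma_unfold sum_squares_eq_0_iff by (simp add: algebra_simps)

lemma fgamma_root:
  assumes "d \<ge> 1"
    and g: "\<forall>i<m. 0 \<le> peval n (g i) x \<and> peval n (g i) x \<le> \<eta> i"
    and R: "(\<Sum>i<n. (x i)\<^sup>2) \<le> R" and \<beta>: "- peval n p x \<le> \<beta>" and \<gamma>: "peval n p x \<le> \<gamma>"
  shows "\<exists>z. z (n+m+2) = 1 \<and> fgamma n m d p g R \<eta> \<beta> \<gamma> z = 0"
proof -
  define A where "A = R + (\<Sum>i<m. \<eta> i) + \<beta> + \<gamma>"
  define B where "B = (\<Sum>i<n. (x i)\<^sup>2) + (\<gamma> - peval n p x) + (\<Sum>i<m. peval n (g i) x)"
  have "0 \<le> B" unfolding B_def using g \<gamma> by (auto intro!: add_nonneg_nonneg sum_nonneg)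
  moreover have "B \<le> A" unfolding B_def A_def using R \<beta> g sum_mono[of "{..<m}" "\<lambda>i. peval n (g i) x" \<eta>]
    by auto
  ultimately have AB: "B ^ d \<le> A ^ d" by (rule power_mono[rotated])
  \<comment> \<open>The slacks are square roots of the constraint values; the last one absorbs the gap
    \<open>A\<^sup>d - B\<^sup>d \<ge> 0\<close> left by the bounds \<open>R\<close>, \<open>\<eta>\<close>, \<open>\<beta>\<close>.\<close>
  define z where "z = (\<lambda>i. if i < n then x i else if i = n then sqrt (\<gamma> - peval n p x)
      else if i \<le> n + m then sqrt (peval n (g (i - n - 1)) x)
      else if i = n + m + 1 then root (2*d) (A ^ d - B ^ d) else if i = n + m + 2 then 1 else 0)"
  have y: "z (n+m+2) = 1" unfolding z_def by simp
  have s0: "(z n)\<^sup>2 = \<gamma> - peval n p x" unfolding z_def using \<gamma> by simp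
  have sg: "(z (n + Suc i))\<^sup>2 = peval n (g i) x" if "i < m" for i
    unfolding z_def using that g by auto
  have homog_z: "homog n (2*d) c (n+m+2) z = peval n c x" for c
    unfolding homog_def peval_def monom_def using y by (auto simp: z_def intro!: sum.cong prod.cong)
  have "(\<Sum>j\<le>m. (z (n+j))\<^sup>2) = (\<gamma> - peval n p x) + (\<Sum>i<m. peval n (g i) x)"
    unfolding sum.atMost_shift using s0 sg by simp
  moreover have "(\<Sum>i<n. (z i)\<^sup>2) = (\<Sum>i<n. (x i)\<^sup>2)" unfolding z_def by simp
  moreover have "z (n+m+1) ^ (2*d) = A ^ d - B ^ d" unfolding z_def using \<open>d \<ge> 1\<close> AB by simp
  ultimately have "fgamma n m d p g R \<eta> \<beta> \<gamma> z = 0"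
    unfolding fgamma_eq_0_iff homog_z y using s0 sg by (simp add: A_def B_def add.assoc)
  with y show ?thesis by blast
qed

lemma fgamma_eq_0_at_infinity:
  assumes "d \<ge> 1" and root: "fgamma n m d p g R \<eta> \<beta> \<gamma> z = 0" and y: "z (n+m+2) = 0"
  shows "\<forall>i<n+m+3. z i = 0"
proof -
  define Q where "Q = (\<Sum>i<n. (z i)\<^sup>2) + (\<Sum>j\<le>m. (z (n+j))\<^sup>2)"
  have "Q ^ d + z (n+m+1) ^ (2*d) = 0"
    using root y \<open>d \<ge> 1\<close> unfolding fgamma_eq_0_iff Q_def by (simp add: power_0_left)
  moreover have "0 \<le> Q" unfolding Q_def by (intro add_nonneg_nonneg sum_nonneg) auto
  moreover have "0 \<le> z (n+m+1) ^ (2*d)" by (simp add: zero_le_even_power)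
  ultimately have "Q = 0" "z (n+m+1) = 0" by (auto simp: add_nonneg_eq_0_iff)
  then have "(\<Sum>i<n. (z i)\<^sup>2) = 0" "(\<Sum>j\<le>m. (z (n+j))\<^sup>2) = 0"
    unfolding Q_def by (simp_all add: add_nonneg_eq_0_iff sum_nonneg)
  then have "\<forall>i<n. z i = 0" "\<forall>j\<le>m. z (n+j) = 0"
    by (subst (asm) sum_nonneg_eq_0_iff; simp)+
  then have "z i = 0" if "n \<le> i" "i \<le> n + m" for i
    using that le_add_diff_inverse[of n i] by (metis add_le_cancel_left)
  moreover have "i < n \<or> (n \<le> i \<and> i \<le> n + m) \<or> i = n + m + 1 \<or> i = n + m + 2"
    if "i < n + m + 3" for i using that by linarith
  ultimately show ?thesis using \<open>\<forall>i<n. z i = 0\<close> \<open>z (n+m+1) = 0\<close> y by blast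
qed

lemma fgamma_eq_0_affine:
  assumes "d \<ge> 1" "deg_le n (2*d) p" "\<forall>i<m. deg_le n (2*d) (g i)"
    and root: "fgamma n m d p g R \<eta> \<beta> \<gamma> z = 0" and y: "z (n+m+2) \<noteq> 0"
  defines "x \<equiv> \<lambda>i. if i < n then z i / z (n+m+2) else 0"
  shows "(\<forall>i<m. 0 \<le> peval n (g i) x) \<and> peval n p x \<le> \<gamma>"
proof -
  let ?y = "z (n+m+2)"
  have homog_z: "homog n (2*d) c (n+m+2) z = ?y ^ (2*d) * peval n c x" if "deg_le n (2*d) c" for c
    using homog_eq_power_peval[OF that] y unfolding x_def by simp
  have y_pos: "0 < ?y ^ (2*d)" using y by (simp add: power_mult)
  have slack_nonneg: "0 \<le> (z j)\<^sup>2 * ?y ^ (2*d-2)" for j by (simp add: zero_le_even_power)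
  have "?y ^ (2*d) * (\<gamma> - peval n p x) = (z n)\<^sup>2 * ?y ^ (2*d-2)"
    using root homog_z assms(2) unfolding fgamma_eq_0_iff by (auto simp: algebra_simps)
  then have p_le: "0 \<le> ?y ^ (2*d) * (\<gamma> - peval n p x)" using slack_nonneg by simp
  have "?y ^ (2*d) * peval n (g i) x = (z (n + Suc i))\<^sup>2 * ?y ^ (2*d-2)" if "i < m" for i
    using root that homog_z assms(3) unfolding fgamma_eq_0_iff by auto
  then have g_nonneg: "\<forall>i<m. 0 \<le> ?y ^ (2*d) * peval n (g i) x" using slack_nonneg by simp
  show ?thesis using p_le g_nonneg y_pos by (simp add: zero_le_mult_iff)
qed

lemma fgamma_pos_def:
  assumes "d \<ge> 1" "deg_le n (2*d) p" "\<forall>i<m. deg_le n (2*d) (g i)"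
    and below: "\<And>x. (\<forall>i\<ge>n. x i = 0) \<Longrightarrow> (\<forall>i<m. 0 \<le> peval n (g i) x) \<Longrightarrow> \<gamma> < peval n p x"
  shows "pos_def (n+m+3) (fgamma n m d p g R \<eta> \<beta> \<gamma>)"
  unfolding pos_def_def
proof (intro allI impI)
  fix z :: "nat \<Rightarrow> real" assume nonzero: "\<exists>i<n+m+3. z i \<noteq> 0"
  show "fgamma n m d p g R \<eta> \<beta> \<gamma> z > 0"
  proof (rule ccontr)
    assume "\<not> ?thesis"
    then have root: "fgamma n m d p g R \<eta> \<beta> \<gamma> z = 0"
      using fgamma_nonneg[of n m d p g R \<eta> \<beta> \<gamma> z] by simp
    show False
    proof (cases "z (n+m+2) = 0")
      case True
      then show False using fgamma_eq_0_at_infinity[OF \<open>d \<ge> 1\<close> root] nonzero by blast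
    next
      case False
      then show False using fgamma_eq_0_affine[OF assms(1-3) root False]
          below[of "\<lambda>i. if i < n then z i / z (n+m+2) else 0"] by auto
    qed
  qed
qed

theorem theorem2p2:
  fixes n m d :: nat
    and p :: "(nat \<Rightarrow> nat) \<Rightarrow> real"
    and g :: "nat \<Rightarrow> (nat \<Rightarrow> nat) \<Rightarrow> real"
    and S :: "(nat \<Rightarrow> real) set"
    and R \<beta> :: real and \<eta> :: "nat \<Rightarrow> real"
    and K :: "nat \<Rightarrow> nat \<Rightarrow> nat \<Rightarrow> ((nat \<Rightarrow> real) \<Rightarrow> real) set"
    and s :: "nat \<Rightarrow> nat \<Rightarrow> (nat \<Rightarrow> real) \<Rightarrow> real"
    and N D :: nat and pstar :: ereal and l :: "nat \<Rightarrow> ereal"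
  assumes p_poly: "\<exists>k. deg_le n k p"
    and g_poly: "\<forall>i<m. \<exists>k. deg_le n k (g i)"
    and S_def: "S = {x. (\<forall>i\<ge>n. x i = 0) \<and> (\<forall>i<m. peval n (g i) x \<ge> 0)}"
    and pstar_def: "pstar = (INF x\<in>S. ereal (peval n p x))"
    and d_def: "d = (LEAST d. d \<ge> 1 \<and> deg_le n (2*d) p \<and> (\<forall>i<m. deg_le n (2*d) (g i)))"
    and R_pos: "R > 0" and R_bound: "\<forall>x\<in>S. (\<Sum>i<n. (x i)\<^sup>2) \<le> R"
    and eta_bound: "\<forall>i<m. \<forall>x\<in>S. peval n (g i) x \<le> \<eta> i"
    and beta_bound: "\<forall>x\<in>S. - peval n p x \<le> \<beta>"
    and N_def: "N = n + m + 3" and D_def: "D = 2 * d"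
    and Ka: "\<forall>n' d' r. n' > 0 \<longrightarrow> d' > 0 \<longrightarrow> K r n' d' \<subseteq> nonneg_forms n' (2*d')"
    and sa: "\<forall>n' d'. n' > 0 \<longrightarrow> d' > 0 \<longrightarrow> s n' d' \<in> K 0 n' d' \<and> pos_def n' (s n' d')"
    and Kb: "\<forall>n' d' q. n' > 0 \<longrightarrow> d' > 0 \<longrightarrow> is_form n' (2*d') q \<longrightarrow> pos_def n' q
               \<longrightarrow> (\<exists>r. q \<in> K r n' d')"
    and Kc: "\<forall>n' d' r. n' > 0 \<longrightarrow> d' > 0 \<longrightarrow> K r n' d' \<subseteq> K (Suc r) n' d'"
    and Kd: "\<forall>n' d' r q \<epsilon>. n' > 0 \<longrightarrow> d' > 0 \<longrightarrow> q \<in> K r n' d' \<longrightarrow> 0 \<le> \<epsilon> \<longrightarrow> \<epsilon> \<le> 1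
               \<longrightarrow> (\<lambda>z. q z + \<epsilon> * s n' d' z) \<in> K r n' d'"
    and l_def: "\<forall>r. l r = Sup {ereal \<gamma> | \<gamma>.
               (\<lambda>z. fgamma n m d p g R \<eta> \<beta> \<gamma> z - (1 / real r) * s N D z) \<in> K r N D}"
  shows "(\<forall>r\<ge>1. l r \<le> pstar) \<and> (\<forall>r\<ge>1. l r \<le> l (Suc r)) \<and> (\<lambda>r. l (Suc r)) \<longlonglongrightarrow> pstar"
proof -
  have "d \<ge> 1 \<and> deg_le n (2*d) p \<and> (\<forall>i<m. deg_le n (2*d) (g i))"
    unfolding d_def by (rule LeastI_ex[OF ex_even_deg_le[OF p_poly g_poly]])
  then have d: "d \<ge> 1" "deg_le n (2*d) p" "\<forall>i<m. deg_le n (2*d) (g i)" by auto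
  have ND: "N > 0" "D > 0" using d by (auto simp: N_def D_def)
  show ?thesis
  proof (rule hierarchy_bounds_tendsto[where K="\<lambda>r. K r N D" and s="s N D" and n=N and k="2*D"])
    show "is_form N (2*D) (fgamma n m d p g R \<eta> \<beta> \<gamma>)" for \<gamma>
      using fgamma_is_form[OF d] by (simp add: N_def D_def)
  next
    fix \<gamma> assume "ereal \<gamma> < pstar"
    then have "\<gamma> < peval n p x" if "x \<in> S" for x
      using that unfolding pstar_def by (auto dest: less_INF_D)
    then show "pos_def N (fgamma n m d p g R \<eta> \<beta> \<gamma>)"
      unfolding N_def S_def by (intro fgamma_pos_def[OF d]) auto
  next
    fix \<gamma> assume "pstar < ereal \<gamma>"
    then obtain x where x: "x \<in> S" and p_less: "peval n p x < \<gamma>"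
      unfolding pstar_def by (auto simp: INF_less_iff)
    have "\<forall>i<m. 0 \<le> peval n (g i) x \<and> peval n (g i) x \<le> \<eta> i"
      using x eta_bound unfolding S_def by simp
    from fgamma_root[OF d(1) this R_bound[rule_format, OF x] beta_bound[rule_format, OF x]
        less_imp_le[OF p_less]]
    obtain z where z: "z (n+m+2) = 1" "fgamma n m d p g R \<eta> \<beta> \<gamma> z = 0" by blast
    moreover have "\<exists>i<N. z i \<noteq> 0" using z(1) unfolding N_def by (intro exI[of _ "n+m+2"]) simp
    ultimately show "\<exists>z. (\<exists>i<N. z i \<noteq> 0) \<and> fgamma n m d p g R \<eta> \<beta> \<gamma> z = 0" by blast
  qed (use ND Ka sa Kb Kc Kd l_def in \<open>simp_all\<close>)
qed

end
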